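(* If $r \in \mathbb{Q}_{>1} \setminus \mathbb{N}$, then the set of elasticities $R(S_r)$ is dense in $\mathbb{R}_{\ge 1}$.
   Context: $S_r$ is the additive submonoid of $(\mathbb{Q}_{\ge 0},+)$ generated by $\{r^n : n \in \mathbb{N}_0\}$; for $r \in \mathbb{Q}_{>1}\setminus\mathbb{N}$ it is atomic with atoms $r^n$, $n \in \mathbb{N}_0$. $\mathsf{L}(x)$ denotes the set of lengths of factorizations of $x$ into atoms. The elasticity of $x \ne 0$ is $\rho(x) = \sup \mathsf{L}(x)/\inf \mathsf{L}(x)$, $\rho(0)=1$, and $R(S_r) = \{\rho(x) : x \in S_r\}$. *)

theory Defs
  imports "HOL-Analysis.Analysis" "HOL-Library.Multiset"
begin

inductive_set Sr :: "rat \<Rightarrow> rat set" for r :: rat where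
  zero: "0 \<in> Sr r"
| pow: "r ^ n \<in> Sr r"
| add: "x \<in> Sr r \<Longrightarrow> y \<in> Sr r \<Longrightarrow> x + y \<in> Sr r"

definition atoms :: "rat set \<Rightarrow> rat set" where
  "atoms M = {a \<in> M. a \<noteq> 0 \<and> (\<forall>b\<in>M. \<forall>c\<in>M. a = b + c \<longrightarrow> b = 0 \<or> c = 0)}"

definition factorizations :: "rat set \<Rightarrow> rat \<Rightarrow> rat multiset set" where
  "factorizations M x = {F. set_mset F \<subseteq> atoms M \<and> sum_mset F = x}"

definition lengths :: "rat set \<Rightarrow> rat \<Rightarrow> nat set" where
  "lengths M x = size ` factorizations M x"

definition elasticity :: "rat set \<Rightarrow> rat \<Rightarrow> real" where
  "elasticity M x = (if x = 0 then 1
     else real (Sup (lengths M x)) / real (Inf (lengths M x)))"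

definition elasticity_set :: "rat set \<Rightarrow> real set" where
  "elasticity_set M = elasticity M ` M"

end

theory Submission
  imports Defs "HOL-Number_Theory.Cong"
begin

text \<open>Write \<open>r = p/q\<close> in lowest terms, so \<open>q \<ge> 2\<close>. A factorization is a multiset of
  exponents, and multiplying by \<open>q\<^sup>N\<close> turns an equality of values into an identity
  \<open>\<Sum> c\<^sub>i p\<^sup>i q\<^bsup>N-i\<^esup> = \<Sum> d\<^sub>i p\<^sup>i q\<^bsup>N-i\<^esup>\<close> of naturals. Coprimality and the exchange
  \<open>p r\<^sup>i = q r\<^bsup>i+1\<^esup>\<close> show that a factorization in which every exponent occurs fewer than
  \<open>p\<close> times has minimal length, and one in which every positive exponent occurs fewer
  than \<open>q\<close> times has maximal length. For \<open>x = p\<^sup>n + r\<^bsup>K+1\<^esup> + \<dots> + r\<^bsup>K+t\<^esup>\<close> with \<open>K\<close>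
  large this gives maximal length \<open>p\<^sup>n + t\<close> and minimal length \<open>m + t\<close> for some
  \<open>m \<le> q\<^sup>n\<close>, and the ratios \<open>(p\<^sup>n + t)/(m + t)\<close> come arbitrarily close to any \<open>y > 1\<close>
  when first \<open>n\<close> and then \<open>t\<close> are chosen suitably.\<close>

definition pq_value :: "nat \<Rightarrow> nat \<Rightarrow> nat \<Rightarrow> (nat \<Rightarrow> nat) \<Rightarrow> nat" where
  "pq_value p q N c = (\<Sum>i\<le>N. c i * (p ^ i * q ^ (N - i)))"

lemma pq_value_Suc_low:
  "pq_value p q (Suc N) c = c 0 * q ^ Suc N + p * pq_value p q N (\<lambda>i. c (Suc i))"
  unfolding pq_value_def sum.atMost_Suc_shift by (simp add: sum_distrib_left mult_ac)

lemma pq_value_Suc_high: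
  "pq_value p q (Suc N) c = q * pq_value p q N c + c (Suc N) * p ^ Suc N"
proof -
  have "(\<Sum>i\<le>N. c i * (p ^ i * q ^ (Suc N - i))) = q * (\<Sum>i\<le>N. c i * (p ^ i * q ^ (N - i)))"
    by (simp add: sum_distrib_left Suc_diff_le mult_ac)
  then show ?thesis
    unfolding pq_value_def by (simp add: sum.atMost_Suc)
qed

lemma sum_atMost_add_delta:
  fixes f :: "nat \<Rightarrow> 'a::comm_monoid_add"
  shows "(\<Sum>i\<le>N. f i + (if i = j then a else 0)) = (\<Sum>i\<le>N. f i) + (if j \<le> N then a else 0)"
  by (simp add: sum.distrib)

lemma pq_value_add_delta:
  "pq_value p q N (\<lambda>i. c i + (if i = j then a else 0))
     = pq_value p q N c + (if j \<le> N then a * (p ^ j * q ^ (N - j)) else 0)"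
proof -
  have "(c i + (if i = j then a else 0)) * (p ^ i * q ^ (N - i))
          = c i * (p ^ i * q ^ (N - i)) + (if i = j then a * (p ^ j * q ^ (N - j)) else 0)" for i
    by (simp add: distrib_right)
  then show ?thesis
    unfolding pq_value_def by (simp only: sum_atMost_add_delta)
qed

lemma pq_value_eq_min_digit_sum:
  assumes "coprime p q" and "q < p"
  shows "pq_value p q N c = pq_value p q N d \<Longrightarrow> \<forall>i\<le>N. d i < p
           \<Longrightarrow> (\<Sum>i\<le>N. d i) \<le> (\<Sum>i\<le>N. c i)"
proof (induction N arbitrary: c d)
  case 0
  then show ?case by (simp add: pq_value_def)
next
  case (Suc N)
  define X where "X = pq_value p q N (\<lambda>i. c (Suc i))"
  define Y where "Y = pq_value p q N (\<lambda>i. d (Suc i))"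
  have eq: "c 0 * q ^ Suc N + p * X = d 0 * q ^ Suc N + p * Y"
    using Suc.prems(1) by (simp add: pq_value_Suc_low X_def Y_def)
  text \<open>Modulo \<open>p\<close> the lowest digits agree; the \<open>k p\<close> surplus copies of exponent \<open>0\<close> in
    \<open>c\<close> are traded for \<open>k q\<close> copies of exponent \<open>1\<close>, which lowers the digit sum.\<close>
  then have "[c 0 * q ^ Suc N = d 0 * q ^ Suc N] (mod p)"
    unfolding cong_def by (metis mod_mult_self2 mult.commute)
  moreover have "coprime (q ^ Suc N) p"
    using assms(1) by (simp add: coprime_commute)
  ultimately have "[c 0 = d 0] (mod p)"
    using cong_mult_rcancel_nat by blast
  then have "c 0 mod p = d 0"
    using Suc.prems(2) by (simp add: cong_def)
  then obtain k where ck: "c 0 = d 0 + k * p"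
    by (metis mod_mult_div_eq add.commute mult.commute)
  have "p * (k * q ^ Suc N + X) = p * Y"
    using eq ck by (simp add: algebra_simps)
  then have "k * q ^ Suc N + X = Y"
    using assms(2) by simp
  define c' where "c' = (\<lambda>i. c (Suc i) + (if i = 0 then k * q else 0))"
  have "pq_value p q N c' = pq_value p q N (\<lambda>i. d (Suc i))"
    unfolding c'_def pq_value_add_delta using \<open>k * q ^ Suc N + X = Y\<close>
    by (simp add: X_def Y_def mult_ac)
  then have "(\<Sum>i\<le>N. d (Suc i)) \<le> (\<Sum>i\<le>N. c' i)"
    using Suc.IH[of c' "\<lambda>i. d (Suc i)"] Suc.prems(2) by simp
  also have "\<dots> = (\<Sum>i\<le>N. c (Suc i)) + k * q"
    unfolding c'_def sum_atMost_add_delta by simp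
  finally have "(\<Sum>i\<le>N. d (Suc i)) \<le> (\<Sum>i\<le>N. c (Suc i)) + k * q" .
  moreover have "k * q \<le> k * p"
    using assms(2) by simp
  ultimately show ?case
    using ck unfolding sum.atMost_Suc_shift by linarith
qed

lemma pq_value_eq_max_digit_sum:
  assumes "coprime p q" and "q < p" and "0 < q"
  shows "pq_value p q N c = pq_value p q N d \<Longrightarrow> \<forall>i. 1 \<le> i \<longrightarrow> i \<le> N \<longrightarrow> d i < q
           \<Longrightarrow> (\<Sum>i\<le>N. c i) \<le> (\<Sum>i\<le>N. d i)"
proof (induction N arbitrary: c d)
  case 0
  then show ?case by (simp add: pq_value_def)
next
  case (Suc N)
  define X where "X = pq_value p q N c"
  define Y where "Y = pq_value p q N d"
  define P where "P = p ^ Suc N"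
  have eq: "q * X + c (Suc N) * P = q * Y + d (Suc N) * P"
    using Suc.prems(1) by (simp add: pq_value_Suc_high X_def Y_def P_def)
  text \<open>Modulo \<open>q\<close> the highest digits agree; the \<open>k q\<close> surplus copies of exponent
    \<open>N + 1\<close> in \<open>c\<close> are traded for \<open>k p\<close> copies of exponent \<open>N\<close>, which raises the digit sum.\<close>
  then have "[c (Suc N) * P = d (Suc N) * P] (mod q)"
    unfolding cong_def by (metis mod_mult_self2 mult.commute add.commute)
  moreover have "coprime P q"
    using assms(1) by (simp add: P_def)
  ultimately have "[c (Suc N) = d (Suc N)] (mod q)"
    using cong_mult_rcancel_nat by blast
  then have "c (Suc N) mod q = d (Suc N)"
    using Suc.prems(2) by (simp add: cong_def)
  then obtain k where ck: "c (Suc N) = d (Suc N) + k * q"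
    by (metis mod_mult_div_eq add.commute mult.commute)
  have "q * (X + k * P) = q * Y"
    using eq ck by (simp add: algebra_simps)
  then have "X + k * P = Y"
    using assms(3) by simp
  define c' where "c' = (\<lambda>i. c i + (if i = N then k * p else 0))"
  have "pq_value p q N c' = pq_value p q N d"
    unfolding c'_def pq_value_add_delta using \<open>X + k * P = Y\<close>
    by (simp add: X_def Y_def P_def mult_ac)
  then have "(\<Sum>i\<le>N. c i) + k * p \<le> (\<Sum>i\<le>N. d i)"
    using Suc.IH[of c' d] Suc.prems(2) unfolding c'_def sum_atMost_add_delta by simp
  moreover have "k * q \<le> k * p"
    using assms(2) by simp
  ultimately show ?case
    using ck unfolding sum.atMost_Suc by linarith
qed

lemma size_eq_sum_count_atMost:
  fixes E :: "nat multiset"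
  assumes "set_mset E \<subseteq> {..N}"
  shows "size E = (\<Sum>i\<le>N. count E i)"
proof -
  have "size E = sum (count E) (set_mset E)"
    by (rule size_multiset_overloaded_eq)
  also have "\<dots> = (\<Sum>i\<le>N. count E i)"
    using assms by (intro sum.mono_neutral_left) (auto simp: not_in_iff)
  finally show ?thesis .
qed

lemma shifted_ratio_approx:
  fixes M m :: nat and y e :: real
  assumes "1 < y" and "0 < e" and "1 \<le> m" and "y * m < M"
    and "(y - 1) * ((y - 1) / e + 1) \<le> real M - real m"
  shows "\<exists>t. \<bar>real (M + t) / real (m + t) - y\<bar> < e"
proof -
  text \<open>\<open>D\<close> is the real solution of \<open>(M + D) / (m + D) = y\<close>; its floor is close enough
    because the error \<open>(y - 1) (D - t) / (m + t)\<close> is small once \<open>m + t\<close> is large.\<close>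
  define D where "D = (real M - y * m) / (y - 1)"
  define t where "t = nat \<lfloor>D\<rfloor>"
  have "0 < D"
    unfolding D_def using assms(1,4) by simp
  then have t: "real t \<le> D" "D < real t + 1"
    unfolding t_def by linarith+
  have mt: "0 < real m + real t"
    using assms(3) by simp
  have numerator: "(y - 1) * (D - t) = real M + t - y * (m + t)"
    unfolding D_def using assms(1) by (simp add: field_simps)
  have "real (M + t) / real (m + t) - y = (real M + t - y * (m + t)) / (m + t)"
    using mt by (simp add: field_simps)
  also have "\<dots> = (y - 1) * (D - t) / (m + t)"
    using numerator by simp
  finally have err: "real (M + t) / real (m + t) - y = (y - 1) * (D - t) / (m + t)" .
  have "m + D = (real M - m) / (y - 1)"
    unfolding D_def using assms(1) by (simp add: field_simps)
  also have "\<dots> \<ge> (y - 1) / e + 1"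
    using assms(1,5) by (simp add: field_simps mult.commute)
  finally have "(y - 1) / e < m + t"
    using t by linarith
  then have "(y - 1) / (m + t) < e"
    using assms(2) mt by (simp add: field_simps)
  moreover have "(y - 1) * (D - t) / (m + t) \<le> (y - 1) / (m + t)"
    using t assms(1) mt by (intro divide_right_mono) (auto simp: mult_le_cancel_left1)
  moreover have "0 \<le> (y - 1) * (D - t) / (m + t)"
    using t assms(1) mt by simp
  ultimately have "\<bar>real (M + t) / real (m + t) - y\<bar> < e"
    unfolding err abs_less_iff by linarith
  then show ?thesis ..
qed

lemma exists_power_gap:
  fixes p q :: nat and y c :: real
  assumes "0 < q" and "q < p"
  shows "\<exists>n. y * q ^ n < p ^ n \<and> c \<le> real (p ^ n) - real (q ^ n)"
proof -
  define R where "R = real p / real q"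
  have "1 < R"
    unfolding R_def using assms by simp
  then obtain n where n: "max y (c + 1) < R ^ n"
    using real_arch_pow by blast
  have p_n: "real p ^ n = R ^ n * real q ^ n"
    unfolding R_def using assms by (simp add: power_divide)
  have q_n: "1 \<le> real q ^ n"
    using assms by simp
  have "1 \<le> R ^ n"
    using \<open>1 < R\<close> by simp
  then have gap: "R ^ n - 1 \<le> (R ^ n - 1) * real q ^ n"
    using q_n by (simp add: mult_le_cancel_left1)
  have "y * real q ^ n < R ^ n * real q ^ n"
    using n q_n assms(1) by (intro mult_strict_right_mono) auto
  then show ?thesis
    using p_n n gap by (intro exI[of _ n]) (auto simp: algebra_simps)
qed

locale coprime_ratio =
  fixes p q :: nat
  assumes coprime: "coprime p q" and q_ge_2: "2 \<le> q" and q_less_p: "q < p"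
begin

definition base :: rat where
  "base = of_nat p / of_nat q"

definition exps_value :: "nat multiset \<Rightarrow> rat" where
  "exps_value E = (\<Sum>i\<in>#E. base ^ i)"

lemma base_mult_q: "base * of_nat q = of_nat p"
  using q_ge_2 unfolding base_def by simp

lemma one_less_base: "1 < base"
  using q_less_p q_ge_2 unfolding base_def by simp

lemma exps_value_empty [simp]: "exps_value {#} = 0"
  by (simp add: exps_value_def)

lemma exps_value_add_mset [simp]: "exps_value (add_mset i E) = base ^ i + exps_value E"
  by (simp add: exps_value_def)

lemma exps_value_union [simp]: "exps_value (E + F) = exps_value E + exps_value F"
  by (simp add: exps_value_def)

lemma exps_value_replicate [simp]: "exps_value (replicate_mset k i) = of_nat k * base ^ i"
  by (induction k) (auto simp: algebra_simps)

lemma exps_value_nonneg: "0 \<le> exps_value E"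
  by (induction E) (use one_less_base in auto)

lemma exps_value_ge_1: "E \<noteq> {#} \<Longrightarrow> 1 \<le> exps_value E"
proof -
  assume "E \<noteq> {#}"
  then obtain i F where "E = add_mset i F"
    by (metis multiset_cases)
  moreover have "1 \<le> base ^ i"
    using one_less_base by simp
  ultimately show ?thesis
    using exps_value_nonneg[of F] by simp
qed

lemma exps_value_eq_0_iff [simp]: "exps_value E = 0 \<longleftrightarrow> E = {#}"
  using exps_value_ge_1 by fastforce

lemma pq_value_count:
  assumes "set_mset E \<subseteq> {..N}"
  shows "of_nat (pq_value p q N (count E)) = exps_value E * of_nat q ^ N"
  using assms
proof (induction E)
  case empty
  then show ?case by (simp add: pq_value_def)
next
  case (add i E)
  have "i \<le> N"
    using add.prems by simp
  have "base ^ i * of_nat q ^ N = base ^ i * of_nat q ^ i * of_nat q ^ (N - i)"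
    using \<open>i \<le> N\<close> by (simp add: power_add[symmetric])
  also have "\<dots> = of_nat (p ^ i * q ^ (N - i))"
    using base_mult_q by (simp add: power_mult_distrib[symmetric])
  finally have "base ^ i * of_nat q ^ N = of_nat (p ^ i * q ^ (N - i))" .
  moreover have "count (add_mset i E) = (\<lambda>j. count E j + (if j = i then 1 else 0))"
    by auto
  ultimately show ?case
    using add \<open>i \<le> N\<close> by (simp add: pq_value_add_delta distrib_right)
qed

lemma exps_value_eq_imp_pq_value_eq:
  assumes "exps_value E = exps_value G" "set_mset E \<subseteq> {..N}" "set_mset G \<subseteq> {..N}"
  shows "pq_value p q N (count E) = pq_value p q N (count G)"
proof -
  have "(of_nat (pq_value p q N (count E)) :: rat) = of_nat (pq_value p q N (count G))"
    using pq_value_count[OF assms(2)] pq_value_count[OF assms(3)] assms(1) by simp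
  then show ?thesis
    by simp
qed

lemma obtain_atMost_bound:
  fixes E G :: "nat multiset"
  obtains N where "set_mset E \<subseteq> {..N}" "set_mset G \<subseteq> {..N}"
proof -
  obtain N where "\<forall>i\<in>set_mset (E + G). i \<le> N"
    using finite_nat_set_iff_bounded_le by blast
  then show thesis
    using that by auto
qed

lemma reduced_imp_min_size:
  assumes "exps_value E = exps_value G" and "\<forall>i. count G i < p"
  shows "size G \<le> size E"
proof -
  obtain N where N: "set_mset E \<subseteq> {..N}" "set_mset G \<subseteq> {..N}"
    by (rule obtain_atMost_bound)
  have "(\<Sum>i\<le>N. count G i) \<le> (\<Sum>i\<le>N. count E i)"
    using pq_value_eq_min_digit_sum[OF coprime q_less_p exps_value_eq_imp_pq_value_eq[OF assms(1) N]]
      assms(2) by simp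
  then show ?thesis
    using size_eq_sum_count_atMost N by simp
qed

lemma coreduced_imp_max_size:
  assumes "exps_value E = exps_value G" and "\<forall>i\<ge>1. count G i < q"
  shows "size E \<le> size G"
proof -
  obtain N where N: "set_mset E \<subseteq> {..N}" "set_mset G \<subseteq> {..N}"
    by (rule obtain_atMost_bound)
  have "(\<Sum>i\<le>N. count E i) \<le> (\<Sum>i\<le>N. count G i)"
    using pq_value_eq_max_digit_sum[OF coprime q_less_p _ exps_value_eq_imp_pq_value_eq[OF assms(1) N]]
      assms(2) q_ge_2 by simp
  then show ?thesis
    using size_eq_sum_count_atMost N by simp
qed

lemma min_size_imp_reduced:
  assumes "\<forall>G. exps_value G = exps_value E \<longrightarrow> size E \<le> size G"
  shows "count E i < p"
proof (rule ccontr)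
  assume "\<not> count E i < p"
  define R where "R = replicate_mset p i"
  have "R \<subseteq># E"
    using \<open>\<not> count E i < p\<close> unfolding R_def subseteq_mset_def by simp
  then have E_split: "E = (E - R) + R"
    by simp
  define G where "G = (E - R) + replicate_mset q (Suc i)"
  have "of_nat q * base ^ Suc i = of_nat p * base ^ i"
    using base_mult_q by (simp add: mult_ac)
  then have "exps_value G = exps_value E"
    by (subst E_split) (simp add: G_def R_def)
  moreover have "size E = size (E - R) + p"
    by (subst E_split) (simp add: R_def)
  moreover have "size G = size (E - R) + q"
    by (simp add: G_def)
  ultimately show False
    using assms q_less_p by fastforce
qed

lemma exists_reduced:
  "\<exists>G. exps_value G = exps_value E \<and> size G \<le> size E \<and> (\<forall>i. count G i < p)"
proof -
  obtain G where "exps_value G = exps_value E"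
    and least: "\<forall>G'. exps_value G' = exps_value E \<longrightarrow> size G \<le> size G'"
    using ex_has_least_nat[of "\<lambda>G. exps_value G = exps_value E" E size] by blast
  then show ?thesis
    using min_size_imp_reduced[of G] by fastforce
qed

lemma Sr_base_eq_range: "Sr base = range exps_value"
proof
  show "Sr base \<subseteq> range exps_value"
  proof
    fix x assume "x \<in> Sr base"
    then show "x \<in> range exps_value"
    proof (induction rule: Sr.induct)
      case zero
      have "0 = exps_value {#}"
        by simp
      then show ?case
        by (rule range_eqI)
    next
      case (pow n)
      have "base ^ n = exps_value {#n#}"
        by simp
      then show ?case
        by (rule range_eqI)
    next
      case (add x y)
      then obtain E F where "x = exps_value E" "y = exps_value F"
        by blast
      then have "x + y = exps_value (E + F)"
        by simp
      then show ?case
        by (rule range_eqI)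
    qed
  qed
next
  show "range exps_value \<subseteq> Sr base"
  proof
    fix x assume "x \<in> range exps_value"
    then obtain E where "x = exps_value E" by blast
    then show "x \<in> Sr base"
      by (induction E arbitrary: x) (auto intro: Sr.intros)
  qed
qed

lemma atoms_Sr_base: "atoms (Sr base) = range (\<lambda>n. base ^ n)"
proof
  show "atoms (Sr base) \<subseteq> range (\<lambda>n. base ^ n)"
  proof
    fix a assume "a \<in> atoms (Sr base)"
    then have "a \<in> Sr base" "a \<noteq> 0"
      and indecomposable: "\<forall>b\<in>Sr base. \<forall>c\<in>Sr base. a = b + c \<longrightarrow> b = 0 \<or> c = 0"
      unfolding atoms_def by auto
    then obtain E where E: "a = exps_value E"
      unfolding Sr_base_eq_range by blast
    then have "E \<noteq> {#}"
      using \<open>a \<noteq> 0\<close> by auto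
    then obtain i F where EF: "E = add_mset i F"
      by (metis multiset_cases)
    have "base ^ i \<in> Sr base" "exps_value F \<in> Sr base"
      by (rule Sr.pow) (simp add: Sr_base_eq_range)
    moreover have "a = base ^ i + exps_value F"
      using E EF by simp
    ultimately have "base ^ i = 0 \<or> exps_value F = 0"
      using indecomposable by blast
    then have "F = {#}"
      using one_less_base by simp
    then show "a \<in> range (\<lambda>n. base ^ n)"
      using E EF by simp
  qed
next
  show "range (\<lambda>n. base ^ n) \<subseteq> atoms (Sr base)"
  proof
    fix a assume "a \<in> range (\<lambda>n. base ^ n)"
    then obtain n where a: "a = exps_value {#n#}"
      by auto
    have "b = 0 \<or> c = 0" if bc: "b \<in> Sr base" "c \<in> Sr base" and "a = b + c" for b c
    proof -
      obtain B C where BC: "b = exps_value B" "c = exps_value C"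
        using bc unfolding Sr_base_eq_range by blast
      then have "exps_value (B + C) = exps_value {#n#}"
        using a \<open>a = b + c\<close> by simp
      moreover have "\<forall>i\<ge>1. count {#n#} i < q"
        using q_ge_2 by simp
      ultimately have "size (B + C) \<le> size {#n#}"
        by (rule coreduced_imp_max_size)
      then have "B = {#} \<or> C = {#}"
        by (cases B; cases C) auto
      then show ?thesis
        using BC by auto
    qed
    moreover have "a \<noteq> 0"
      using a one_less_base by simp
    moreover have "a \<in> Sr base"
      using a unfolding Sr_base_eq_range by (rule range_eqI)
    ultimately show "a \<in> atoms (Sr base)"
      unfolding atoms_def by blast
  qed
qed

lemma lengths_Sr_base: "lengths (Sr base) x = size ` {E. exps_value E = x}"
proof -
  let ?atom = "\<lambda>n::nat. base ^ n"
  have "factorizations (Sr base) x = image_mset ?atom ` {E. exps_value E = x}"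
  proof (intro set_eqI iffI)
    fix F assume "F \<in> factorizations (Sr base) x"
    then have F: "set_mset F \<subseteq> range ?atom" "sum_mset F = x"
      unfolding factorizations_def atoms_Sr_base by auto
    have "image_mset ?atom (image_mset (inv ?atom) F) = F"
      unfolding image_mset.compositionality
      using F(1) by (intro multiset.map_ident_strong) (auto simp: f_inv_into_f)
    then show "F \<in> image_mset ?atom ` {E. exps_value E = x}"
      using F(2) unfolding exps_value_def by (metis (mono_tags, lifting) image_eqI mem_Collect_eq)
  qed (auto simp: factorizations_def atoms_Sr_base exps_value_def)
  then show ?thesis
    unfolding lengths_def by (simp add: image_image)
qed

lemma elasticity_Sr_base:
  assumes "exps_value G = exps_value H" and "G \<noteq> {#}"
    and "\<forall>i. count G i < p" and "\<forall>i\<ge>1. count H i < q"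
  shows "elasticity (Sr base) (exps_value H) = real (size H) / real (size G)"
proof -
  have "Sup (lengths (Sr base) (exps_value H)) = size H"
    unfolding lengths_Sr_base
    by (rule cSup_eq_maximum) (use coreduced_imp_max_size assms(4) in auto)
  moreover have "Inf (lengths (Sr base) (exps_value H)) = size G"
    unfolding lengths_Sr_base
    by (rule cInf_eq_minimum) (use reduced_imp_min_size assms(1,3) in auto)
  moreover have "exps_value H \<noteq> 0"
    using assms(1,2) by (metis exps_value_eq_0_iff)
  ultimately show ?thesis
    unfolding elasticity_def by simp
qed

lemma power_shift_ratios_in_elasticity_set:
  "\<exists>m. 1 \<le> m \<and> m \<le> q ^ n \<and> (\<forall>t. real (p ^ n + t) / real (m + t) \<in> elasticity_set (Sr base))"
proof -
  have "exps_value (replicate_mset (q ^ n) n) = of_nat (p ^ n)"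
    using base_mult_q by (simp add: power_mult_distrib[symmetric] mult.commute)
  then obtain G0 where G0: "exps_value G0 = of_nat (p ^ n)" "size G0 \<le> q ^ n" "\<forall>i. count G0 i < p"
    using exists_reduced[of "replicate_mset (q ^ n) n"] by auto
  have "G0 \<noteq> {#}"
    using G0(1) q_less_p by auto
  obtain K where K: "set_mset G0 \<subseteq> {..K}"
    using obtain_atMost_bound by blast
  have "real (p ^ n + t) / real (size G0 + t) \<in> elasticity_set (Sr base)" for t
  proof -
    define B where "B = mset_set {K<..K + t}"
    define G where "G = G0 + B"
    define H where "H = replicate_mset (p ^ n) 0 + B"
    have count_B: "count B i = (if K < i \<and> i \<le> K + t then 1 else 0)" for i
      unfolding B_def by simp
    have "exps_value G = exps_value H"
      unfolding G_def H_def using G0(1) by simp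
    moreover have "G \<noteq> {#}"
      using \<open>G0 \<noteq> {#}\<close> unfolding G_def by simp
    moreover have "\<forall>i. count G i < p"
    proof
      fix i
      show "count G i < p"
      proof (cases "i \<le> K")
        case True
        then show ?thesis using G0(3) count_B unfolding G_def by simp
      next
        case False
        then have "count G0 i = 0"
          using K by (auto simp: not_in_iff[symmetric])
        then show ?thesis
          using count_B q_ge_2 q_less_p unfolding G_def by simp
      qed
    qed
    moreover have "\<forall>i\<ge>1. count H i < q"
      using count_B q_ge_2 unfolding H_def by simp
    ultimately have "elasticity (Sr base) (exps_value H) = real (size H) / real (size G)"
      by (rule elasticity_Sr_base)
    moreover have "size H = p ^ n + t" "size G = size G0 + t"
      unfolding H_def G_def B_def by simp_all
    moreover have "exps_value H \<in> Sr base"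
      unfolding Sr_base_eq_range by simp
    ultimately show ?thesis
      unfolding elasticity_set_def by (metis image_eqI)
  qed
  moreover have "1 \<le> size G0"
    using \<open>G0 \<noteq> {#}\<close> by (simp add: Suc_le_eq nonempty_has_size)
  ultimately show ?thesis
    using G0(2) by blast
qed

lemma elasticity_set_Sr_base_dense: "{y. 1 \<le> y} \<subseteq> closure (elasticity_set (Sr base))"
proof
  fix y :: real
  assume "y \<in> {y. 1 \<le> y}"
  show "y \<in> closure (elasticity_set (Sr base))"
  proof (cases "y = 1")
    case True
    have "elasticity (Sr base) 0 = 1"
      unfolding elasticity_def by simp
    then have "y \<in> elasticity_set (Sr base)"
      unfolding elasticity_set_def True using Sr.zero by (metis image_eqI)
    then show ?thesis
      using closure_subset by blast
  next
    case False
    with \<open>y \<in> {y. 1 \<le> y}\<close> have "1 < y"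
      by simp
    show ?thesis
      unfolding closure_approachable
    proof (intro allI impI)
      fix e :: real
      assume "0 < e"
      obtain n where n: "y * q ^ n < p ^ n" "(y - 1) * ((y - 1) / e + 1) \<le> real (p ^ n) - real (q ^ n)"
        using exists_power_gap q_ge_2 q_less_p by (metis less_le_trans zero_less_numeral)
      obtain m where m: "1 \<le> m" "m \<le> q ^ n"
        and ratios: "\<forall>t. real (p ^ n + t) / real (m + t) \<in> elasticity_set (Sr base)"
        using power_shift_ratios_in_elasticity_set by blast
      have "y * m \<le> y * q ^ n"
        using m(2) \<open>1 < y\<close> by simp
      then have "y * m < p ^ n"
        using n(1) by linarith
      moreover have "(y - 1) * ((y - 1) / e + 1) \<le> real (p ^ n) - real m"
        using n(2) m(2) of_nat_le_iff[of m "q ^ n"] by linarith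
      ultimately obtain t where "\<bar>real (p ^ n + t) / real (m + t) - y\<bar> < e"
        using shifted_ratio_approx[OF \<open>1 < y\<close> \<open>0 < e\<close> m(1)] by blast
      then show "\<exists>z\<in>elasticity_set (Sr base). dist z y < e"
        using ratios unfolding dist_real_def by blast
    qed
  qed
qed

end

lemma rat_gt_1_not_nat_obtain_coprime_ratio:
  fixes r :: rat
  assumes "1 < r" and "r \<notin> \<nat>"
  obtains p q where "coprime_ratio p q" and "r = of_nat p / of_nat q"
proof -
  obtain a b where ab: "quotient_of r = (a, b)"
    by (cases "quotient_of r")
  have "0 < b" "coprime a b" "r = of_int a / of_int b"
    using quotient_of_denom_pos[OF ab] quotient_of_coprime[OF ab] quotient_of_div[OF ab] .
  have "(of_int b :: rat) < r * of_int b"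
    using assms(1) \<open>0 < b\<close> by simp
  also have "\<dots> = of_int a"
    using \<open>r = of_int a / of_int b\<close> \<open>0 < b\<close> by simp
  finally have "b < a"
    by simp
  have "b \<noteq> 1"
  proof
    assume "b = 1"
    then have "r = of_nat (nat a)"
      using \<open>r = of_int a / of_int b\<close> \<open>b < a\<close> by simp
    then show False
      using assms(2) by (simp add: Nats_def)
  qed
  show thesis
  proof (rule that)
    show "coprime_ratio (nat a) (nat b)"
      using \<open>0 < b\<close> \<open>b < a\<close> \<open>b \<noteq> 1\<close> \<open>coprime a b\<close>
      by unfold_locales (auto simp: coprime_int_iff[symmetric])
    show "r = of_nat (nat a) / of_nat (nat b)"
      using \<open>0 < b\<close> \<open>b < a\<close> \<open>r = of_int a / of_int b\<close> by simp
  qed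
qed

theorem proposition4p5:
  fixes r :: rat
  assumes "r > 1" and "r \<notin> \<nat>"
  shows "{y :: real. y \<ge> 1} \<subseteq> closure (elasticity_set (Sr r))"
proof -
  obtain p q where "coprime_ratio p q" and r: "r = of_nat p / of_nat q"
    using rat_gt_1_not_nat_obtain_coprime_ratio assms by blast
  then interpret coprime_ratio p q
    by simp
  have "base = r"
    unfolding base_def r ..
  then show ?thesis
    using elasticity_set_Sr_base_dense by simp
qed

end
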